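(* Let $E$ be a Hermite–Biehler entire function with no real zeros whose phase function satisfies $\varphi'\in L^\infty(\mathbb{R})$, and let $0<p<\infty$. Suppose there exists $C>0$ such that $\lVert f/E\rVert_\infty\le C\lVert f/E\rVert_p$ for all real entire functions $f\in\mathcal{H}^p(E)$. Then $C(p,E)\le C$.
   Context: An entire function $E$ is Hermite–Biehler if $\lvert E(\overline{z})\rvert < \lvert E(z)\rvert$ for $z$ in the upper half-plane $\mathbb{C}_+$. For an entire $g$, $g^{\#}(z)=\overline{g(\overline z)}$; $g$ is real entire if real on $\mathbb{R}$. The phase function $\varphi$ is a smooth real function on $\mathbb{R}$ with $E^{\#}(x)/E(x)=e^{i\varphi(x)}$. For $0<p<\infty$, $\mathcal{H}^p(E)$ is the space of entire $f$ with $f/E, f^{\#}/E$ in the Hardy space $H^p(\mathbb{C}_+)$, $\lVert f/E\rVert_p=(\int_{\mathbb{R}}\lvert f/E\rvert^p dx)^{1/p}$; $\mathcal{H}^\infty(E)$ is defined with bounded analytic functions and $\lVert f/E\rVert_\infty=\sup_{\mathbb{R}}\lvert f/E\rvert$. When $\varphi'\in L^\infty$, $\mathcal{H}^p(E)\subset\mathcal{H}^\infty(E)$ and $C(p,E)$ is the norm of this embedding. *)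

theory Defs
  imports "HOL-Analysis.Analysis"
begin

definition upper_half_plane :: "complex set" where
  "upper_half_plane = {z. Im z > 0}"

definition sharp :: "(complex \<Rightarrow> complex) \<Rightarrow> complex \<Rightarrow> complex" where
  "sharp g = (\<lambda>z. cnj (g (cnj z)))"

definition entire :: "(complex \<Rightarrow> complex) \<Rightarrow> bool" where
  "entire f \<longleftrightarrow> f holomorphic_on UNIV"

definition real_entire :: "(complex \<Rightarrow> complex) \<Rightarrow> bool" where
  "real_entire f \<longleftrightarrow> entire f \<and> (\<forall>x::real. f (complex_of_real x) \<in> \<real>)"

definition hermite_biehler :: "(complex \<Rightarrow> complex) \<Rightarrow> bool" where
  "hermite_biehler E \<longleftrightarrow> entire E \<and>
     (\<forall>z. Im z > 0 \<longrightarrow> norm (E (cnj z)) < norm (E z))"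

definition hardy :: "real \<Rightarrow> (complex \<Rightarrow> complex) \<Rightarrow> bool" where
  "hardy p g \<longleftrightarrow> g holomorphic_on upper_half_plane \<and>
     (SUP y\<in>{0<..}. \<integral>\<^sup>+ x. ennreal (norm (g (Complex x y)) powr p) \<partial>lborel) < \<infinity>"

definition hardy_inf :: "(complex \<Rightarrow> complex) \<Rightarrow> bool" where
  "hardy_inf g \<longleftrightarrow> g holomorphic_on upper_half_plane \<and> bounded (g ` upper_half_plane)"

definition HpE :: "real \<Rightarrow> (complex \<Rightarrow> complex) \<Rightarrow> (complex \<Rightarrow> complex) set" where
  "HpE p E = {f. entire f \<and> hardy p (\<lambda>z. f z / E z) \<and> hardy p (\<lambda>z. sharp f z / E z)}"

definition HinfE :: "(complex \<Rightarrow> complex) \<Rightarrow> (complex \<Rightarrow> complex) set" where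
  "HinfE E = {f. entire f \<and> hardy_inf (\<lambda>z. f z / E z) \<and> hardy_inf (\<lambda>z. sharp f z / E z)}"

definition Lp_normE :: "real \<Rightarrow> (complex \<Rightarrow> complex) \<Rightarrow> (complex \<Rightarrow> complex) \<Rightarrow> ereal" where
  "Lp_normE p E f =
     (let I = \<integral>\<^sup>+ x. ennreal (norm (f (complex_of_real x) / E (complex_of_real x)) powr p) \<partial>lborel
      in if I = \<infinity> then \<infinity> else ereal (enn2real I powr (1 / p)))"

definition sup_normE :: "(complex \<Rightarrow> complex) \<Rightarrow> (complex \<Rightarrow> complex) \<Rightarrow> ereal" where
  "sup_normE E f = (SUP x::real. ereal (norm (f (complex_of_real x) / E (complex_of_real x))))"

definition phase_deriv_bounded :: "(complex \<Rightarrow> complex) \<Rightarrow> bool" where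
  "phase_deriv_bounded E \<longleftrightarrow>
     (\<exists>\<phi> \<phi>' :: real \<Rightarrow> real. \<exists>B.
        (\<forall>x. sharp E (complex_of_real x) / E (complex_of_real x) = exp (\<i> * complex_of_real (\<phi> x))) \<and>
        (\<forall>x. (\<phi> has_real_derivative \<phi>' x) (at x)) \<and>
        continuous_on UNIV \<phi>' \<and>
        (\<forall>x. \<bar>\<phi>' x\<bar> \<le> B))"

text \<open>C(p,E): the norm of the embedding H^p(E) into H^infinity(E), i.e. the
  supremum of ||f/E||_infinity / ||f/E||_p over nonzero f in H^p(E).\<close>
definition embedding_const :: "real \<Rightarrow> (complex \<Rightarrow> complex) \<Rightarrow> ereal" where
  "embedding_const p E =
     (SUP f\<in>{f \<in> HpE p E. f \<noteq> (\<lambda>_. 0)}. sup_normE E f / Lp_normE p E f)"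

end

theory Submission
  imports Defs
begin

text \<open>Given \<open>f \<in> H\<^sup>p(E)\<close> and a real point \<open>x\<^sub>0\<close>, pick \<open>\<alpha>\<close> with \<open>|\<alpha>| = 1\<close> and
  \<open>\<alpha> f(x\<^sub>0) \<ge> 0\<close>. Then \<open>g = (\<alpha> f + cnj \<alpha> f\<^sup>#) / 2\<close> is real entire, lies in
  \<open>H\<^sup>p(E)\<close> and equals \<open>Re (\<alpha> f)\<close> on the real line. Hence \<open>|g/E| \<le> |f/E|\<close> on \<open>\<real>\<close>
  with equality at \<open>x\<^sub>0\<close>, so
  \<open>|f(x\<^sub>0)/E(x\<^sub>0)| \<le> \<parallel>g/E\<parallel>\<^sub>\<infinity> \<le> C \<parallel>g/E\<parallel>\<^sub>p \<le> C \<parallel>f/E\<parallel>\<^sub>p\<close>.\<close>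

lemma entire_sharp:
  assumes "entire f"
  shows "entire (sharp f)"
proof -
  have "sharp f = cnj \<circ> f \<circ> cnj"
    by (auto simp: sharp_def)
  then show ?thesis
    using assms holomorphic_on_compose_cnj_cnj[of f UNIV] by (simp add: entire_def holomorphic_on_subset)
qed

lemma borel_measurable_horizontal_line:
  assumes "F holomorphic_on upper_half_plane" "0 < y"
  shows "(\<lambda>x. ennreal (norm (F (Complex x y)) powr p)) \<in> borel_measurable lborel"
proof -
  have "continuous_on UNIV (\<lambda>x. Complex x y)"
    by (simp add: Complex_eq continuous_intros)
  then have "continuous_on UNIV (\<lambda>x. F (Complex x y))"
    by (rule continuous_on_compose2[OF holomorphic_on_imp_continuous_on[OF assms(1)]])
       (auto simp: upper_half_plane_def assms(2))
  then have "(\<lambda>x. F (Complex x y)) \<in> borel_measurable lborel"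
    using borel_measurable_continuous_onI by simp
  then show ?thesis
    by measurable
qed

lemma norm_lincomb_powr_le:
  fixes a b u v :: "'a :: real_normed_div_algebra"
  assumes "norm a + norm b \<le> 1" "0 \<le> p"
  shows "norm (a * u + b * v) powr p \<le> norm u powr p + norm v powr p"
proof -
  have "norm (a * u + b * v) \<le> norm a * norm u + norm b * norm v"
    by (metis norm_mult norm_triangle_ineq)
  also have "\<dots> \<le> (norm a + norm b) * max (norm u) (norm v)"
    by (simp add: distrib_right add_mono mult_left_mono)
  also have "\<dots> \<le> max (norm u) (norm v)"
    using assms(1) by (intro mult_left_le_one_le) (auto simp: le_max_iff_disj)
  finally have "norm (a * u + b * v) powr p \<le> max (norm u) (norm v) powr p"
    using assms(2) by (intro powr_mono2) auto
  also have "\<dots> \<le> norm u powr p + norm v powr p"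
    by (cases "norm u \<le> norm v") (auto simp: max_def)
  finally show ?thesis .
qed

lemma hardy_lincomb:
  assumes "hardy p F" "hardy p G" "0 \<le> p" "norm a + norm b \<le> 1"
  shows "hardy p (\<lambda>z. a * F z + b * G z)"
proof -
  have hol: "F holomorphic_on upper_half_plane" "G holomorphic_on upper_half_plane"
    using assms(1,2) by (auto simp: hardy_def)
  define I where "I H y = (\<integral>\<^sup>+ x. ennreal (norm (H (Complex x y)) powr p) \<partial>lborel)"
    for H :: "complex \<Rightarrow> complex" and y
  have "I (\<lambda>z. a * F z + b * G z) y \<le> I F y + I G y" if "0 < y" for y
  proof -
    have "I (\<lambda>z. a * F z + b * G z) y
       \<le> (\<integral>\<^sup>+ x. (ennreal (norm (F (Complex x y)) powr p) + ennreal (norm (G (Complex x y)) powr p)) \<partial>lborel)"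
      unfolding I_def using assms(3,4)
      by (intro nn_integral_mono) (simp add: norm_lincomb_powr_le flip: ennreal_plus)
    also have "\<dots> = I F y + I G y"
      unfolding I_def using that
      by (intro nn_integral_add borel_measurable_horizontal_line hol) auto
    finally show ?thesis .
  qed
  then have "(SUP y\<in>{0<..}. I (\<lambda>z. a * F z + b * G z) y) \<le> (SUP y\<in>{0<..}. I F y) + (SUP y\<in>{0<..}. I G y)"
    by (intro SUP_least order.trans[OF _ add_mono[OF SUP_upper SUP_upper]]) auto
  also have "\<dots> < \<infinity>"
    using assms(1,2) by (simp add: hardy_def I_def ennreal_add_less_top)
  finally show ?thesis
    using hol by (auto simp: hardy_def I_def intro!: holomorphic_intros)
qed

lemma Lp_normE_mono:
  assumes "\<And>x::real. norm (g x / E x) \<le> norm (f x / E x)" "0 < p"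
  shows "Lp_normE p E g \<le> Lp_normE p E f"
proof -
  define I where "I h = (\<integral>\<^sup>+ x. ennreal (norm (h (complex_of_real x) / E x) powr p) \<partial>lborel)" for h
  have le: "I g \<le> I f"
    unfolding I_def using assms by (intro nn_integral_mono ennreal_leI powr_mono2) auto
  show ?thesis
  proof (cases "I f = \<infinity>")
    case True
    then show ?thesis
      by (simp add: Lp_normE_def flip: I_def)
  next
    case False
    with le have "I g \<noteq> \<infinity>" "enn2real (I g) \<le> enn2real (I f)"
      by (auto simp: top_unique enn2real_mono top.not_eq_extremum)
    with False assms(2) show ?thesis
      by (simp add: Lp_normE_def powr_mono2 flip: I_def)
  qed
qed

lemma
  fixes f :: "complex \<Rightarrow> complex" and \<alpha> :: complex and x :: real
  defines "g \<equiv> \<lambda>z. (\<alpha> / 2) * f z + (cnj \<alpha> / 2) * sharp f z"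
  shows real_part_combination_of_real: "g (complex_of_real x) = complex_of_real (Re (\<alpha> * f x))"
    and sharp_real_part_combination: "sharp g = g"
proof -
  have "g x = ((\<alpha> * f x) + cnj (\<alpha> * f x)) / 2"
    by (simp add: g_def sharp_def add_divide_distrib)
  also have "\<dots> = complex_of_real (Re (\<alpha> * f x))"
    by (subst complex_add_cnj) simp
  finally show "g (complex_of_real x) = complex_of_real (Re (\<alpha> * f x))" .
  show "sharp g = g"
    by (rule ext) (simp add: g_def sharp_def add.commute)
qed

lemma real_entire_real_part_combination:
  assumes "entire f"
  shows "real_entire (\<lambda>z. (\<alpha> / 2) * f z + (cnj \<alpha> / 2) * sharp f z)"
  unfolding real_entire_def
proof
  show "entire (\<lambda>z. (\<alpha> / 2) * f z + (cnj \<alpha> / 2) * sharp f z)"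
    using assms entire_sharp[OF assms] by (auto simp: entire_def intro!: holomorphic_intros)
  show "\<forall>x. (\<alpha> / 2) * f (complex_of_real x) + (cnj \<alpha> / 2) * sharp f (complex_of_real x) \<in> \<real>"
    using real_part_combination_of_real[of \<alpha> f] by simp
qed

lemma real_part_combination_in_HpE:
  assumes "f \<in> HpE p E" "0 < p" "norm \<alpha> = 1"
  shows "(\<lambda>z. (\<alpha> / 2) * f z + (cnj \<alpha> / 2) * sharp f z) \<in> HpE p E"
    (is "?g \<in> _")
proof -
  have "hardy p (\<lambda>z. (\<alpha> / 2) * (f z / E z) + (cnj \<alpha> / 2) * (sharp f z / E z))"
    using assms by (intro hardy_lincomb) (auto simp: HpE_def norm_divide)
  then have "hardy p (\<lambda>z. ?g z / E z)"
    by (simp add: add_divide_distrib)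
  moreover have "entire ?g"
    using assms(1) real_entire_real_part_combination[of f \<alpha>] by (simp add: HpE_def real_entire_def)
  ultimately show ?thesis
    unfolding HpE_def mem_Collect_eq sharp_real_part_combination by simp
qed

lemma unimodular_rotation_to_nonneg:
  obtains \<alpha> :: complex where "norm \<alpha> = 1" "\<alpha> * w = complex_of_real (norm w)"
proof (cases "w = 0")
  case False
  have "cnj w * w = complex_of_real (norm w) ^ 2"
    using complex_norm_square[of w] by (simp add: mult.commute)
  with False show ?thesis
    by (intro that[of "cnj w / complex_of_real (norm w)"]) (auto simp: norm_divide power2_eq_square)
qed (auto intro: that[of 1])

lemma norm_div_le_of_real_entire_bound:
  fixes x\<^sub>0 :: real
  assumes "f \<in> HpE p E" "0 < p" "0 \<le> C"
    and bound: "\<forall>g. real_entire g \<and> g \<in> HpE p E \<longrightarrow> sup_normE E g \<le> ereal C * Lp_normE p E g"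
  shows "ereal (norm (f x\<^sub>0 / E x\<^sub>0)) \<le> ereal C * Lp_normE p E f"
proof -
  obtain \<alpha> where \<alpha>: "norm \<alpha> = 1" "\<alpha> * f x\<^sub>0 = complex_of_real (norm (f x\<^sub>0))"
    using unimodular_rotation_to_nonneg .
  define g where "g = (\<lambda>z. (\<alpha> / 2) * f z + (cnj \<alpha> / 2) * sharp f z)"
  have g_real: "g (complex_of_real x) = complex_of_real (Re (\<alpha> * f x))" for x
    unfolding g_def by (rule real_part_combination_of_real)
  have "real_entire g"
    using assms(1) unfolding g_def by (intro real_entire_real_part_combination) (simp add: HpE_def)
  moreover have "g \<in> HpE p E"
    unfolding g_def using assms(1,2) \<alpha>(1) by (rule real_part_combination_in_HpE)
  ultimately have g_bound: "sup_normE E g \<le> ereal C * Lp_normE p E g"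
    using bound by blast
  have g_le_f: "norm (g x / E x) \<le> norm (f x / E x)" for x :: real
  proof -
    have "\<bar>Re (\<alpha> * f x)\<bar> \<le> norm (f x)"
      using abs_Re_le_cmod[of "\<alpha> * f x"] by (simp add: norm_mult \<alpha>(1))
    then show ?thesis
      unfolding g_real norm_divide norm_of_real by (rule divide_right_mono) auto
  qed
  have "ereal (norm (f x\<^sub>0 / E x\<^sub>0)) = ereal (norm (g x\<^sub>0 / E x\<^sub>0))"
    using \<alpha>(2) by (simp add: g_real norm_divide)
  also have "\<dots> \<le> sup_normE E g"
    unfolding sup_normE_def by (rule SUP_upper) auto
  also have "\<dots> \<le> ereal C * Lp_normE p E g"
    by (rule g_bound)
  also have "\<dots> \<le> ereal C * Lp_normE p E f"
    using assms(2,3) g_le_f by (intro ereal_mult_left_mono Lp_normE_mono) auto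
  finally show ?thesis .
qed

lemma ereal_divide_le_of_le_mult:
  fixes a b c :: ereal
  assumes "0 \<le> a" "0 \<le> b" "0 \<le> c" "a \<le> c * b"
  shows "a / b \<le> c"
  using assms by (cases a b c rule: ereal3_cases) (auto simp: field_simps split: if_split_asm)

theorem lemma5:
  fixes E :: "complex \<Rightarrow> complex" and p C :: real
  assumes "hermite_biehler E"
    and "\<forall>x::real. E (complex_of_real x) \<noteq> 0"
    and "phase_deriv_bounded E"
    and "0 < p"
    and "0 < C"
    and "\<forall>f. real_entire f \<and> f \<in> HpE p E \<longrightarrow> sup_normE E f \<le> ereal C * Lp_normE p E f"
  shows "embedding_const p E \<le> ereal C"
  unfolding embedding_const_def
proof (rule SUP_least)
  fix f assume "f \<in> {f \<in> HpE p E. f \<noteq> (\<lambda>_. 0)}"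
  then have "sup_normE E f \<le> ereal C * Lp_normE p E f"
    unfolding sup_normE_def using assms(4-6)
    by (intro SUP_least norm_div_le_of_real_entire_bound) auto
  moreover have "0 \<le> sup_normE E f"
    unfolding sup_normE_def by (rule order.trans[OF _ SUP_upper[of 0]]) auto
  moreover have "0 \<le> Lp_normE p E f"
    by (simp add: Lp_normE_def Let_def)
  ultimately show "sup_normE E f / Lp_normE p E f \<le> ereal C"
    using assms(5) by (intro ereal_divide_le_of_le_mult) auto
qed

end
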